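(* $$\max_{U_1,U_2\in\mathcal R}P(U_1,U_2)=\frac{3}{50}\left(9+\sqrt6\right)=0.004\left(\sqrt{393-48\sqrt6}+138+7\sqrt6\right)\approx 0.687.$$
   Context: Basis of $\mathbb C^3$: $|1\rangle,|2\rangle,|3\rangle$ (standard basis). Spin-1 matrices in this basis: $J_y=\frac{1}{\sqrt2}\begin{pmatrix}0&-i&0\\ i&0&-i\\ 0&i&0\end{pmatrix}$, $J_z=\mathrm{diag}(1,0,-1)$. Define $Z(\alpha,\beta,\gamma)=e^{-i\alpha J_z}e^{-i\beta J_y}e^{-i\gamma J_z}$. Let $\mathcal R=\{Z(\alpha,\beta,\gamma):\alpha,\beta,\gamma\in\mathbb R\}\subset U(3)$. For $j\in\{1,2\}$ let $P_j=|j\rangle\langle j|$ and $\mathcal M_j(\rho)=P_j\rho P_j+(\mathbb I-P_j)\rho(\mathbb I-P_j)$. Define $P(U_1,U_2)=\langle 2|U_2\,\mathcal M_1(U_1|1\rangle\langle 1|U_1^\dagger)\,U_2^\dagger|2\rangle$ for $U_1,U_2\in\mathcal R$. *)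

theory Defs
  imports "HOL-Analysis.Analysis"
begin

type_synonym cmat3 = "complex^3^3"
type_synonym cvec3 = "complex^3"

primrec mpow :: "cmat3 \<Rightarrow> nat \<Rightarrow> cmat3" where
  "mpow A 0 = mat 1"
| "mpow A (Suc n) = A ** mpow A n"

definition mexp :: "cmat3 \<Rightarrow> cmat3" where
  "mexp A = (\<Sum>n. (1 / fact n) *\<^sub>R mpow A n)"

definition cadj :: "cmat3 \<Rightarrow> cmat3" where
  "cadj A = (\<chi> i j. cnj (A $ j $ i))"

text \<open>Spin-1 matrices in the standard basis |1>,|2>,|3> (indices 1,2,3 of type 3).\<close>
definition Jy :: cmat3 where
  "Jy = (\<chi> i j. (1 / complex_of_real (sqrt 2)) *
      (if i = 1 \<and> j = 2 then - \<i>
       else if i = 2 \<and> j = 1 then \<i>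
       else if i = 2 \<and> j = 3 then - \<i>
       else if i = 3 \<and> j = 2 then \<i>
       else 0))"

definition Jz :: cmat3 where
  "Jz = (\<chi> i j. if i = j then (if i = 1 then 1 else if i = 2 then 0 else -1) else 0)"

definition cscale :: "complex \<Rightarrow> cmat3 \<Rightarrow> cmat3" where
  "cscale c A = (\<chi> i j. c * A $ i $ j)"

definition Zrot :: "real \<Rightarrow> real \<Rightarrow> real \<Rightarrow> cmat3" where
  "Zrot \<alpha> \<beta> \<gamma> = mexp (cscale (- \<i> * complex_of_real \<alpha>) Jz)
                 ** mexp (cscale (- \<i> * complex_of_real \<beta>) Jy)
                 ** mexp (cscale (- \<i> * complex_of_real \<gamma>) Jz)"

definition Rset :: "cmat3 set" where
  "Rset = {Zrot \<alpha> \<beta> \<gamma> | \<alpha> \<beta> \<gamma>. True}"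

definition ket :: "3 \<Rightarrow> cvec3" where
  "ket j = (\<chi> i. if i = j then 1 else 0)"

definition proj :: "3 \<Rightarrow> cmat3" where
  "proj j = (\<chi> a b. ket j $ a * cnj (ket j $ b))"

definition meas :: "3 \<Rightarrow> cmat3 \<Rightarrow> cmat3" where
  "meas j \<rho> = proj j ** \<rho> ** proj j + (mat 1 - proj j) ** \<rho> ** (mat 1 - proj j)"

definition Pprob :: "cmat3 \<Rightarrow> cmat3 \<Rightarrow> complex" where
  "Pprob U1 U2 = (U2 ** meas 1 (U1 ** proj 1 ** cadj U1) ** cadj U2) $ 2 $ 2"

end

theory Submission
  imports Defs
begin

text \<open>Every \<open>U \<in> \<R>\<close> has entries \<open>U\<^sub>j\<^sub>k = e^(-i \<alpha> m\<^sub>j) d\<^sub>j\<^sub>k(\<beta>) e^(-i \<gamma> m\<^sub>k)\<close>, where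
  \<open>m = (1, 0, -1)\<close> and the Wigner matrix is \<open>d(\<beta>) = 1 - i sin \<beta> J\<^sub>y + (cos \<beta> - 1) J\<^sub>y\<^sup>2\<close>, because
  \<open>J\<^sub>y\<^sup>3 = J\<^sub>y\<close>. Hence \<open>P\<close> depends only on \<open>\<beta>\<^sub>1\<close>, \<open>\<beta>\<^sub>2\<close> and \<open>\<theta> = \<gamma>\<^sub>2 + \<alpha>\<^sub>1\<close>, and it is bounded
  by the quadratic form \<open>A a\<^sup>2 + C b\<^sup>2 + 2B a b\<close> in the unit vector \<open>(a, b) = (|cos \<beta>\<^sub>2|, |sin \<beta>\<^sub>2|)\<close>,
  with equality at \<open>\<theta> = \<pi>\<close> when the signs are right. Such a form is bounded by \<open>K > A\<close> iff
  \<open>B\<^sup>2 \<le> (K - A)(K - C)\<close>. For \<open>K = 3(9 + \<surd>6)/50\<close> and \<open>x = cos \<beta>\<^sub>1\<close> the difference of the two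
  sides is \<open>(x - (1 - \<surd>6)/5)\<^sup>2\<close> times a polynomial that is positive on \<open>[-1, 1]\<close>, so \<open>K\<close> bounds
  \<open>P\<close> and is attained at \<open>cos \<beta>\<^sub>1 = (1 - \<surd>6)/5\<close>.\<close>

lemma matrix_mult_entry_3:
  "((A::cmat3) ** B) $ i $ j = A$i$1 * B$1$j + A$i$2 * B$2$j + A$i$3 * B$3$j"
  by (simp add: matrix_matrix_mult_def sum_3)

lemma proj_1_eq: "proj 1 = (\<chi> a b. if a = 1 \<and> b = 1 then 1 else 0)"
  by (simp add: proj_def ket_def vec_eq_iff)

lemma meas_1_entry: "meas 1 \<rho> $ k $ l = (if (k = 1) = (l = 1) then \<rho> $ k $ l else 0)"
  using exhaust_3[of k] exhaust_3[of l]
  by (auto simp: meas_def proj_1_eq matrix_mult_entry_3 mat_def)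

lemma conj_proj_1_entry: "(U ** proj 1 ** cadj U) $ k $ l = U$k$1 * cnj (U$l$1)"
  by (simp add: matrix_mult_entry_3 proj_1_eq cadj_def)

lemma conj_entry_2_2:
  "(U ** M ** cadj U) $ 2 $ 2 = (\<Sum>k\<in>UNIV. \<Sum>l\<in>UNIV. U$2$k * M$k$l * cnj (U$2$l))"
  unfolding matrix_matrix_mult_def cadj_def
  by (simp add: sum_distrib_right) (rule sum.swap)

lemma Pprob_eq_norms:
  "Pprob U1 U2 = of_real ((cmod (U2$2$1))\<^sup>2 * (cmod (U1$1$1))\<^sup>2
                        + (cmod (U2$2$2 * U1$2$1 + U2$2$3 * U1$3$1))\<^sup>2)"
  unfolding complex_norm_square of_real_add of_real_mult Pprob_def conj_entry_2_2
  by (simp add: sum_3 meas_1_entry conj_proj_1_entry algebra_simps)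

lemma mexp_eq_vec_lambda:
  assumes "\<And>i j. (\<lambda>n. ((1 / fact n) *\<^sub>R mpow A n) $ i $ j) sums s i j"
  shows "mexp A = (\<chi> i j. s i j)"
proof -
  have partial_sums: "(\<Sum>k<n. (1 / fact k) *\<^sub>R mpow A k) = (\<chi> i j. \<Sum>k<n. ((1 / fact k) *\<^sub>R mpow A k) $ i $ j)" for n
    by (simp add: vec_eq_iff)
  have "(\<lambda>n. (1 / fact n) *\<^sub>R mpow A n) sums (\<chi> i j. s i j)"
    unfolding sums_def partial_sums
    using assms unfolding sums_def by (intro tendsto_vec_lambda) auto
  thus ?thesis unfolding mexp_def by (rule sums_unique[symmetric])
qed

definition cdiag :: "(3 \<Rightarrow> complex) \<Rightarrow> cmat3" where
  "cdiag d = (\<chi> i j. if i = j then d i else 0)"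

lemma cdiag_mult: "cdiag a ** cdiag b = cdiag (\<lambda>i. a i * b i)"
  unfolding cdiag_def vec_eq_iff matrix_mult_entry_3 using exhaust_3 by auto

lemma mpow_cdiag: "mpow (cdiag d) n = cdiag (\<lambda>i. d i ^ n)"
proof (induction n)
  case 0
  show ?case by (simp add: cdiag_def mat_def)
qed (simp add: cdiag_mult)

lemma mexp_cdiag: "mexp (cdiag d) = cdiag (\<lambda>i. exp (d i))"
  unfolding cdiag_def
proof (rule mexp_eq_vec_lambda)
  fix i j
  show "(\<lambda>n. ((1 / fact n) *\<^sub>R mpow (\<chi> i j. if i = j then d i else 0) n) $ i $ j)
      sums (if i = j then exp (d i) else 0)"
    using mpow_cdiag[of d, unfolded cdiag_def] by (simp add: divide_inverse_commute exp_converges)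
qed

lemma cdiag_conj_entry: "(cdiag u ** A ** cdiag v) $ i $ j = u i * A $ i $ j * v j"
  unfolding cdiag_def matrix_mult_entry_3 using exhaust_3[of i] exhaust_3[of j] by auto

lemma cscale_mult: "cscale a A ** cscale b B = cscale (a * b) (A ** B)"
  by (simp add: cscale_def vec_eq_iff matrix_mult_entry_3 algebra_simps)

lemma mpow_cscale_cube:
  assumes "M ** (M ** M) = M"
  shows "mpow (cscale c M) n =
    (if n = 0 then mat 1 else cscale (c ^ n) (if odd n then M else M ** M))"
proof (induction n)
  case (Suc n)
  then show ?case
    using assms by (cases "n = 0") (auto simp: cscale_mult matrix_mul_rid)
qed simp

lemma exp_series_coeff_imag:
  "(- \<i> * complex_of_real b) ^ n / of_real (fact n)
     = of_real (cos_coeff n * b ^ n) - \<i> * of_real (sin_coeff n * b ^ n)"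
  by (cases "even n")
     (auto elim!: evenE oddE simp: cos_coeff_def sin_coeff_def power_mult_distrib power_mult)

lemma exp_series_term_cscale_cube:
  assumes "M ** (M ** M) = M"
  shows "((1 / fact n) *\<^sub>R mpow (cscale (- \<i> * complex_of_real b) M) n) $ i $ j
    = (if n = 0 then mat 1 $ i $ j else 0) - \<i> * of_real (sin_coeff n * b ^ n) * M $ i $ j
      + of_real (cos_coeff n * b ^ n - (if n = 0 then 1 else 0)) * (M ** M) $ i $ j"
proof -
  have "((1 / fact n) *\<^sub>R cscale c A) $ i $ j = (c / of_real (fact n)) * A $ i $ j" for c A
    by (simp add: cscale_def) (simp add: scaleR_conv_of_real)
  then show ?thesis
    using exp_series_coeff_imag[of b n]
    by (auto simp: mpow_cscale_cube[OF assms] sin_coeff_def cos_coeff_def algebra_simps)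
qed

lemma mexp_cscale_cube:
  assumes "M ** (M ** M) = M"
  shows "mexp (cscale (- \<i> * complex_of_real b) M) =
     (\<chi> i j. mat 1 $ i $ j - \<i> * of_real (sin b) * M $ i $ j + of_real (cos b - 1) * (M ** M) $ i $ j)"
proof (rule mexp_eq_vec_lambda)
  fix i j :: 3
  have id: "(\<lambda>n. if n = 0 then mat 1 $ i $ j else (0::complex)) sums mat 1 $ i $ j"
    using sums_single[of 0 "\<lambda>_. mat 1 $ i $ j :: complex"] by simp
  have sin: "(\<lambda>n. complex_of_real (sin_coeff n * b ^ n)) sums of_real (sin b)"
    using sums_of_real[OF sin_converges[of b]] by simp
  have "(\<lambda>n. cos_coeff n * b ^ n - (if n = 0 then 1 else 0)) sums (cos b - 1)"
    using sums_diff[OF cos_converges[of b] sums_single[of 0 "\<lambda>_. 1::real"]] by simp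
  then have cos: "(\<lambda>n. complex_of_real (cos_coeff n * b ^ n - (if n = 0 then 1 else 0)))
      sums of_real (cos b - 1)"
    using sums_of_real by fastforce
  show "(\<lambda>n. ((1 / fact n) *\<^sub>R mpow (cscale (- \<i> * complex_of_real b) M) n) $ i $ j) sums
     (mat 1 $ i $ j - \<i> * of_real (sin b) * M $ i $ j + of_real (cos b - 1) * (M ** M) $ i $ j)"
    unfolding exp_series_term_cscale_cube[OF assms]
    by (intro sums_add sums_diff id sums_mult2 sums_mult sin cos)
qed

lemma of_real_sqrt_2_squared: "complex_of_real (sqrt 2) * complex_of_real (sqrt 2) = 2"
  by (simp flip: of_real_mult)

lemma inverse_sqrt_2_squared: "(1 / complex_of_real (sqrt 2)) * (1 / complex_of_real (sqrt 2)) = 1 / 2"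
  using of_real_sqrt_2_squared by (simp add: field_simps)

lemma Jy_squared:
  "Jy ** Jy = (\<chi> i j. if i = j then (if i = 2 then 1 else 1/2)
                      else if (i = 1 \<and> j = 3) \<or> (i = 3 \<and> j = 1) then - 1/2 else 0)"
  unfolding vec_eq_iff forall_3 matrix_mult_entry_3
  by (simp add: Jy_def inverse_sqrt_2_squared of_real_sqrt_2_squared)

lemma Jy_cube: "Jy ** (Jy ** Jy) = Jy"
  unfolding Jy_squared vec_eq_iff forall_3 matrix_mult_entry_3
  by (simp add: Jy_def inverse_sqrt_2_squared of_real_sqrt_2_squared)

definition wigner_d :: "real \<Rightarrow> cmat3" where
  "wigner_d \<beta> = mexp (cscale (- \<i> * complex_of_real \<beta>) Jy)"

lemma wigner_d_entries:
  "wigner_d \<beta> $ 1 $ 1 = of_real ((1 + cos \<beta>) / 2)"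
  "wigner_d \<beta> $ 2 $ 1 = of_real (sin \<beta> / sqrt 2)"
  "wigner_d \<beta> $ 3 $ 1 = of_real ((1 - cos \<beta>) / 2)"
  "wigner_d \<beta> $ 2 $ 2 = of_real (cos \<beta>)"
  "wigner_d \<beta> $ 2 $ 3 = of_real (- sin \<beta> / sqrt 2)"
  unfolding wigner_d_def mexp_cscale_cube[OF Jy_cube] Jy_squared
  by (simp_all add: Jy_def mat_def field_simps)

lemma Zrot_entry:
  "Zrot \<alpha> \<beta> \<gamma> $ i $ j
     = exp (- \<i> * of_real \<alpha> * Jz $ i $ i) * wigner_d \<beta> $ i $ j * exp (- \<i> * of_real \<gamma> * Jz $ j $ j)"
proof -
  have diag: "cscale c Jz = cdiag (\<lambda>k. c * Jz $ k $ k)" for c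
    unfolding cdiag_def cscale_def Jz_def vec_eq_iff by auto
  show ?thesis
    unfolding Zrot_def diag mexp_cdiag wigner_d_def[symmetric] cdiag_conj_entry ..
qed

lemma Jz_diag [simp]: "Jz $ 1 $ 1 = 1" "Jz $ 2 $ 2 = 0" "Jz $ 3 $ 3 = -1"
  by (simp_all add: Jz_def)

text \<open>Only the combination \<open>\<theta> = \<gamma>\<^sub>2 + \<alpha>\<^sub>1\<close> of the outer Euler angles enters.\<close>
definition euler_prob :: "real \<Rightarrow> real \<Rightarrow> real \<Rightarrow> real" where
  "euler_prob \<beta>\<^sub>1 \<beta>\<^sub>2 \<theta> = (sin \<beta>\<^sub>1)\<^sup>2 / 2 * (cos \<beta>\<^sub>2)\<^sup>2 + (1 + (cos \<beta>\<^sub>1)\<^sup>2) / 4 * (sin \<beta>\<^sub>2)\<^sup>2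
     - sin \<beta>\<^sub>1 * (1 - cos \<beta>\<^sub>1) / 2 * cos \<beta>\<^sub>2 * sin \<beta>\<^sub>2 * cos \<theta>"

lemma Pprob_Zrot:
  "Pprob (Zrot \<alpha>\<^sub>1 \<beta>\<^sub>1 \<gamma>\<^sub>1) (Zrot \<alpha>\<^sub>2 \<beta>\<^sub>2 \<gamma>\<^sub>2) = of_real (euler_prob \<beta>\<^sub>1 \<beta>\<^sub>2 (\<gamma>\<^sub>2 + \<alpha>\<^sub>1))"
proof -
  let ?U1 = "Zrot \<alpha>\<^sub>1 \<beta>\<^sub>1 \<gamma>\<^sub>1" and ?U2 = "Zrot \<alpha>\<^sub>2 \<beta>\<^sub>2 \<gamma>\<^sub>2" and ?\<theta> = "\<gamma>\<^sub>2 + \<alpha>\<^sub>1"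
  define p where "p = cos \<beta>\<^sub>2 * sin \<beta>\<^sub>1 / sqrt 2"
  define q where "q = - sin \<beta>\<^sub>2 * (1 - cos \<beta>\<^sub>1) / (2 * sqrt 2)"
  have unit: "cmod (exp (\<i> * of_real t)) = 1" for t
    by (rule norm_exp_i_times)
  have norm_21: "(cmod (?U2$2$1))\<^sup>2 = (sin \<beta>\<^sub>2)\<^sup>2 / 2"
    using unit[of "- \<alpha>\<^sub>2"] unit[of "\<gamma>\<^sub>1"]
    by (simp add: Zrot_entry wigner_d_entries norm_mult norm_divide power_divide)
  have norm_11: "(cmod (?U1$1$1))\<^sup>2 = ((1 + cos \<beta>\<^sub>1) / 2)\<^sup>2"
    using unit[of "- \<alpha>\<^sub>1"] unit[of "- \<gamma>\<^sub>1"]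
    by (simp add: Zrot_entry wigner_d_entries norm_mult power_divide del: of_real_add of_real_divide)
  have "?U2$2$2 * ?U1$2$1 + ?U2$2$3 * ?U1$3$1
      = exp (\<i> * of_real (- \<gamma>\<^sub>1)) * (of_real p + of_real q * exp (\<i> * of_real ?\<theta>))"
    unfolding p_def q_def
    by (simp add: Zrot_entry wigner_d_entries) (simp add: exp_add[symmetric] algebra_simps)
  then have norm_sum: "cmod (?U2$2$2 * ?U1$2$1 + ?U2$2$3 * ?U1$3$1)
      = cmod (of_real p + of_real q * exp (\<i> * of_real ?\<theta>))"
    by (simp only: norm_mult unit mult_1)
  have norm_phase_sum: "(cmod (of_real p + of_real q * exp (\<i> * of_real t)))\<^sup>2
      = p\<^sup>2 + 2 * p * q * cos t + q\<^sup>2 * ((sin t)\<^sup>2 + (cos t)\<^sup>2)" for t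
    by (simp add: cmod_power2 exp_Euler cos_of_real sin_of_real del: sin_cos_squared_add) algebra
  have norm_phase: "(cmod (of_real p + of_real q * exp (\<i> * of_real ?\<theta>)))\<^sup>2
      = p\<^sup>2 + 2 * p * q * cos ?\<theta> + q\<^sup>2"
    using norm_phase_sum[of ?\<theta>] by (simp only: sin_cos_squared_add mult_1_right)
  have "(sin \<beta>\<^sub>2)\<^sup>2 / 2 * ((1 + cos \<beta>\<^sub>1) / 2)\<^sup>2 + (p\<^sup>2 + 2 * p * q * cos ?\<theta> + q\<^sup>2)
      = euler_prob \<beta>\<^sub>1 \<beta>\<^sub>2 ?\<theta>"
    unfolding p_def q_def euler_prob_def by (simp add: power2_eq_square field_simps)
  then show ?thesis
    unfolding Pprob_eq_norms norm_21 norm_11 norm_sum norm_phase by (rule arg_cong)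
qed

lemma quadratic_form_identity:
  fixes K A B C a b :: real
  shows "(K - A) * (K * (a\<^sup>2 + b\<^sup>2) - (A * a\<^sup>2 + C * b\<^sup>2 + 2 * B * a * b))
       = ((K - A) * a - B * b)\<^sup>2 + ((K - A) * (K - C) - B\<^sup>2) * b\<^sup>2"
  by (simp add: algebra_simps power2_eq_square)

lemma quadratic_form_le:
  fixes K A B C a b :: real
  assumes "A < K" "B\<^sup>2 \<le> (K - A) * (K - C)" "a\<^sup>2 + b\<^sup>2 = 1"
  shows "A * a\<^sup>2 + C * b\<^sup>2 + 2 * B * a * b \<le> K"
proof -
  have "(K - A) * (K - (A * a\<^sup>2 + C * b\<^sup>2 + 2 * B * a * b)) \<ge> 0"
    using quadratic_form_identity[of K A a b C B] assms(2,3) by simp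
  with assms(1) show ?thesis by (simp add: zero_le_mult_iff)
qed

lemma quadratic_form_eq:
  fixes K A B C a b :: real
  assumes "A < K" "B\<^sup>2 = (K - A) * (K - C)" "a\<^sup>2 + b\<^sup>2 = 1" "(K - A) * a = B * b"
  shows "A * a\<^sup>2 + C * b\<^sup>2 + 2 * B * a * b = K"
proof -
  have "(K - A) * (K - (A * a\<^sup>2 + C * b\<^sup>2 + 2 * B * a * b)) = 0"
    using quadratic_form_identity[of K A a b C B] assms(2-4) by simp
  with assms(1) show ?thesis by simp
qed

definition max_prob :: real where
  "max_prob = 3 / 50 * (9 + sqrt 6)"

lemma sqrt_6_bounds: "2.4 < sqrt 6" "sqrt 6 < 2.5"
  by (rule real_less_rsqrt real_less_lsqrt; simp add: power2_eq_square)+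

lemma max_prob_gt_half: "max_prob > 1 / 2"
  unfolding max_prob_def using sqrt_6_bounds by simp

text \<open>For \<open>x = cos \<beta>\<^sub>1\<close> this is the discriminant condition of \<open>quadratic_form_le\<close>; its
  double root \<open>(1 - \<surd>6) / 5\<close> is the optimal \<open>cos \<beta>\<^sub>1\<close>.\<close>
lemma max_prob_discriminant:
  fixes x :: real
  shows "16 * ((max_prob - (1 - x\<^sup>2) / 2) * (max_prob - (1 + x\<^sup>2) / 4)) - (1 - x\<^sup>2) * (1 - x)\<^sup>2
     = (x - (1 - sqrt 6) / 5)\<^sup>2 * ((2 * sqrt 6 - 12) / 5 * x + (13 + 32 * sqrt 6) / 25 - x\<^sup>2)"
proof -
  txt \<open>A polynomial identity in \<open>w\<close>; at \<open>w = \<surd>6\<close> the right-hand side vanishes.\<close>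
  have "16 * ((3/50 * (9 + w) - (1 - x\<^sup>2) / 2) * (3/50 * (9 + w) - (1 + x\<^sup>2) / 4)) - (1 - x\<^sup>2) * (1 - x)\<^sup>2
      - (x - (1 - w) / 5)\<^sup>2 * ((2 * w - 12) / 5 * x + (13 + 32 * w) / 25 - x\<^sup>2)
      = (w * w - 6) * (- 2/125 * x * w - 32/625 * w + 87/625 - 3/25 * x\<^sup>2 - 48/125 * x)" for w
    by (simp add: field_simps power2_eq_square)
  from this[of "sqrt 6"] show ?thesis
    unfolding max_prob_def by simp
qed

lemma max_prob_discriminant_nonneg:
  fixes x :: real
  assumes "\<bar>x\<bar> \<le> 1"
  shows "(1 - x\<^sup>2) * (1 - x)\<^sup>2 / 16 \<le> (max_prob - (1 - x\<^sup>2) / 2) * (max_prob - (1 + x\<^sup>2) / 4)"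
proof -
  have "x\<^sup>2 \<le> 1"
    using assms by (simp add: abs_square_le_1)
  moreover have "(2 * sqrt 6 - 12) / 5 * x \<ge> (2 * sqrt 6 - 12) / 5"
    using assms sqrt_6_bounds by (intro mult_left_mono_neg[of x 1, simplified]) auto
  moreover have "(2 * sqrt 6 - 12) / 5 + (13 + 32 * sqrt 6) / 25 - 1 \<ge> 0"
    using sqrt_6_bounds by (simp add: field_simps)
  ultimately have "(2 * sqrt 6 - 12) / 5 * x + (13 + 32 * sqrt 6) / 25 - x\<^sup>2 \<ge> 0"
    by linarith
  then have "(x - (1 - sqrt 6) / 5)\<^sup>2 * ((2 * sqrt 6 - 12) / 5 * x + (13 + 32 * sqrt 6) / 25 - x\<^sup>2) \<ge> 0"
    by simp
  then show ?thesis
    using max_prob_discriminant[of x] by linarith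
qed

lemma euler_prob_le_quadratic_form:
  "euler_prob \<beta>\<^sub>1 \<beta>\<^sub>2 \<theta> \<le> (sin \<beta>\<^sub>1)\<^sup>2 / 2 * \<bar>cos \<beta>\<^sub>2\<bar>\<^sup>2 + (1 + (cos \<beta>\<^sub>1)\<^sup>2) / 4 * \<bar>sin \<beta>\<^sub>2\<bar>\<^sup>2
     + 2 * (\<bar>sin \<beta>\<^sub>1\<bar> * (1 - cos \<beta>\<^sub>1) / 4) * \<bar>cos \<beta>\<^sub>2\<bar> * \<bar>sin \<beta>\<^sub>2\<bar>"
proof -
  have "\<bar>sin \<beta>\<^sub>1 * cos \<beta>\<^sub>2 * sin \<beta>\<^sub>2 * cos \<theta>\<bar> \<le> \<bar>sin \<beta>\<^sub>1\<bar> * \<bar>cos \<beta>\<^sub>2\<bar> * \<bar>sin \<beta>\<^sub>2\<bar>"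
    using abs_cos_le_one[of \<theta>] by (simp add: abs_mult mult_left_le)
  then have "- (sin \<beta>\<^sub>1 * cos \<beta>\<^sub>2 * sin \<beta>\<^sub>2 * cos \<theta>) \<le> \<bar>sin \<beta>\<^sub>1\<bar> * \<bar>cos \<beta>\<^sub>2\<bar> * \<bar>sin \<beta>\<^sub>2\<bar>"
    by linarith
  then have "- (sin \<beta>\<^sub>1 * cos \<beta>\<^sub>2 * sin \<beta>\<^sub>2 * cos \<theta>) * ((1 - cos \<beta>\<^sub>1) / 2)
      \<le> \<bar>sin \<beta>\<^sub>1\<bar> * \<bar>cos \<beta>\<^sub>2\<bar> * \<bar>sin \<beta>\<^sub>2\<bar> * ((1 - cos \<beta>\<^sub>1) / 2)"
    by (rule mult_right_mono) simp
  then show ?thesis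
    unfolding euler_prob_def power2_abs by argo
qed

lemma euler_prob_pi:
  "euler_prob \<beta>\<^sub>1 \<beta>\<^sub>2 pi = (sin \<beta>\<^sub>1)\<^sup>2 / 2 * (cos \<beta>\<^sub>2)\<^sup>2 + (1 + (cos \<beta>\<^sub>1)\<^sup>2) / 4 * (sin \<beta>\<^sub>2)\<^sup>2
     + 2 * (sin \<beta>\<^sub>1 * (1 - cos \<beta>\<^sub>1) / 4) * cos \<beta>\<^sub>2 * sin \<beta>\<^sub>2"
  unfolding euler_prob_def by simp

lemma euler_prob_le_max_prob: "euler_prob \<beta>\<^sub>1 \<beta>\<^sub>2 \<theta> \<le> max_prob"
proof -
  let ?A = "(sin \<beta>\<^sub>1)\<^sup>2 / 2" and ?C = "(1 + (cos \<beta>\<^sub>1)\<^sup>2) / 4"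
  have sin_sq: "(sin \<beta>\<^sub>1)\<^sup>2 = 1 - (cos \<beta>\<^sub>1)\<^sup>2"
    by (rule sin_squared_eq)
  have "?A \<le> 1 / 2"
    by (simp add: sin_sq)
  then have "?A < max_prob"
    using max_prob_gt_half by linarith
  moreover have "(\<bar>sin \<beta>\<^sub>1\<bar> * (1 - cos \<beta>\<^sub>1) / 4)\<^sup>2 \<le> (max_prob - ?A) * (max_prob - ?C)"
    using max_prob_discriminant_nonneg[of "cos \<beta>\<^sub>1"]
    by (simp add: sin_sq power_mult_distrib power_divide)
  moreover have "\<bar>cos \<beta>\<^sub>2\<bar>\<^sup>2 + \<bar>sin \<beta>\<^sub>2\<bar>\<^sup>2 = 1"
    by simp
  ultimately show ?thesis
    using euler_prob_le_quadratic_form[of \<beta>\<^sub>1 \<beta>\<^sub>2 \<theta>] quadratic_form_le order_trans by blast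
qed

lemma exists_angle_cos_sin_proportional:
  fixes B D :: real
  assumes "B \<noteq> 0"
  shows "\<exists>\<beta>. D * cos \<beta> = B * sin \<beta>"
proof -
  define t where "t = D / B"
  have "D = B * t"
    unfolding t_def using assms by simp
  then have "D * cos (arctan t) = B * sin (arctan t)"
    unfolding cos_arctan sin_arctan by simp
  then show ?thesis ..
qed

lemma euler_prob_attains_max_prob: "\<exists>\<beta>\<^sub>1 \<beta>\<^sub>2. euler_prob \<beta>\<^sub>1 \<beta>\<^sub>2 pi = max_prob"
proof -
  define x where "x = (1 - sqrt 6) / 5"
  define \<beta>\<^sub>1 where "\<beta>\<^sub>1 = arccos x"
  have "\<bar>x\<bar> < 1"
    unfolding x_def using sqrt_6_bounds by simp
  then have cos_\<beta>\<^sub>1: "cos \<beta>\<^sub>1 = x" and sin_\<beta>\<^sub>1: "sin \<beta>\<^sub>1 = sqrt (1 - x\<^sup>2)" and "x\<^sup>2 < 1"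
    unfolding \<beta>\<^sub>1_def by (simp_all add: cos_arccos_abs sin_arccos_abs abs_square_less_1)
  let ?A = "(sin \<beta>\<^sub>1)\<^sup>2 / 2" and ?C = "(1 + (cos \<beta>\<^sub>1)\<^sup>2) / 4"
    and ?B = "sin \<beta>\<^sub>1 * (1 - cos \<beta>\<^sub>1) / 4"
  have "?B \<noteq> 0"
    using \<open>\<bar>x\<bar> < 1\<close> \<open>x\<^sup>2 < 1\<close> unfolding cos_\<beta>\<^sub>1 sin_\<beta>\<^sub>1 by simp
  then obtain \<beta>\<^sub>2 where "(max_prob - ?A) * cos \<beta>\<^sub>2 = ?B * sin \<beta>\<^sub>2"
    using exists_angle_cos_sin_proportional by blast
  moreover have "?A \<le> 1 / 2"
    by (simp add: sin_squared_eq)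
  then have "?A < max_prob"
    using max_prob_gt_half by linarith
  moreover have "?B\<^sup>2 = (max_prob - ?A) * (max_prob - ?C)"
  proof -
    have "16 * ((max_prob - (1 - x\<^sup>2) / 2) * (max_prob - (1 + x\<^sup>2) / 4)) - (1 - x\<^sup>2) * (1 - x)\<^sup>2 = 0"
      unfolding max_prob_discriminant by (simp add: x_def)
    moreover have "?B\<^sup>2 = (1 - x\<^sup>2) * (1 - x)\<^sup>2 / 16" "?A = (1 - x\<^sup>2) / 2" "?C = (1 + x\<^sup>2) / 4"
      using \<open>x\<^sup>2 < 1\<close> unfolding cos_\<beta>\<^sub>1 sin_\<beta>\<^sub>1 by (simp_all add: power_mult_distrib power_divide)
    ultimately show ?thesis
      by simp
  qed
  moreover have "(cos \<beta>\<^sub>2)\<^sup>2 + (sin \<beta>\<^sub>2)\<^sup>2 = 1"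
    by simp
  ultimately have "euler_prob \<beta>\<^sub>1 \<beta>\<^sub>2 pi = max_prob"
    unfolding euler_prob_pi by (intro quadratic_form_eq)
  then show ?thesis by blast
qed

lemma sqrt_393_minus_48_sqrt_6: "sqrt (393 - 48 * sqrt 6) = 8 * sqrt 6 - 3"
proof -
  have "393 - 48 * sqrt 6 = (8 * sqrt 6 - 3)\<^sup>2"
    by (simp add: power2_eq_square algebra_simps)
  moreover have "8 * sqrt 6 - 3 \<ge> 0"
    using sqrt_6_bounds by simp
  ultimately show ?thesis
    by simp
qed

theorem corollary1:
  shows "(\<forall>U1\<in>Rset. \<forall>U2\<in>Rset. Im (Pprob U1 U2) = 0)
       \<and> (\<exists>U1\<in>Rset. \<exists>U2\<in>Rset. Re (Pprob U1 U2) = 3 / 50 * (9 + sqrt 6))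
       \<and> (\<forall>U1\<in>Rset. \<forall>U2\<in>Rset. Re (Pprob U1 U2) \<le> 3 / 50 * (9 + sqrt 6))
       \<and> 3 / 50 * (9 + sqrt 6) = 0.004 * (sqrt (393 - 48 * sqrt 6) + 138 + 7 * sqrt 6)"
proof (intro conjI)
  show "\<forall>U1\<in>Rset. \<forall>U2\<in>Rset. Im (Pprob U1 U2) = 0"
    unfolding Rset_def by (auto simp: Pprob_Zrot)
  show "\<forall>U1\<in>Rset. \<forall>U2\<in>Rset. Re (Pprob U1 U2) \<le> 3 / 50 * (9 + sqrt 6)"
    unfolding Rset_def using euler_prob_le_max_prob by (auto simp: Pprob_Zrot max_prob_def)
  obtain \<beta>\<^sub>1 \<beta>\<^sub>2 where "euler_prob \<beta>\<^sub>1 \<beta>\<^sub>2 pi = max_prob"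
    using euler_prob_attains_max_prob by blast
  then have "Re (Pprob (Zrot 0 \<beta>\<^sub>1 0) (Zrot 0 \<beta>\<^sub>2 pi)) = 3 / 50 * (9 + sqrt 6)"
    by (simp add: Pprob_Zrot max_prob_def)
  moreover have "Zrot 0 \<beta>\<^sub>1 0 \<in> Rset" "Zrot 0 \<beta>\<^sub>2 pi \<in> Rset"
    unfolding Rset_def by blast+
  ultimately show "\<exists>U1\<in>Rset. \<exists>U2\<in>Rset. Re (Pprob U1 U2) = 3 / 50 * (9 + sqrt 6)"
    by blast
  show "3 / 50 * (9 + sqrt 6) = 0.004 * (sqrt (393 - 48 * sqrt 6) + 138 + 7 * sqrt 6)"
    unfolding sqrt_393_minus_48_sqrt_6 by simp
qed

end
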